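(* Let $B$ be a translation invariant differentiation basis in $\mathbb{R}^2$. Then every $W_B$-set $E\subset\Gamma_2$ is a set of type $G_{\delta\sigma}$ in $\Gamma_2$.
   Context: A differentiation basis in $\mathbb{R}^n$ is a mapping $B$ assigning to each $x\in\mathbb{R}^n$ a family $B(x)$ of bounded measurable sets of positive Lebesgue measure containing $x$, such that there is a sequence $R_k\in B(x)$ with $\operatorname{diam}R_k\to 0$. $B$ is translation invariant if $B(x)=\{x+R: R\in B(0)\}$ for every $x$. For $f\in L(\mathbb{R}^n)$ the upper and lower derivatives of $\int f$ at $x$ with respect to $B$ are $\overline{D}_B(\int f,x)=\limsup_{R\in B(x),\,\operatorname{diam}R\to0}\frac{1}{|R|}\int_R f$ and $\underline{D}_B(\int f,x)=\liminf_{R\in B(x),\,\operatorname{diam}R\to0}\frac{1}{|R|}\int_R f$; $B$ differentiates $\int f$ if both equal $f(x)$ for almost every $x$. $F_B$ denotes the class of $f\in L(\mathbb{R}^n)$ whose integrals are differentiated by $B$. $\Gamma_2$ is the set of rotations of $\mathbb{R}^2$ about the origin, identified with the unit circle $\mathbb{T}$ (a rotation by angle $\theta$ corresponds to $e^{i\theta}$), with the distance between two rotations being the length of the shorter arc of $\mathbb{T}$ between the corresponding points; the topology on $\Gamma_2$ is that of this metric. For $\gamma\in\Gamma_2$ the $\gamma$-rotated basis is $B(\gamma)(x)=\{x+\gamma(R-x): R\in B(x)\}$. A set $E\subset\Gamma_2$ is a $W_B$-set if there exists $f\in L(\mathbb{R}^2)$ such that (1) $f\notin F_{B(\gamma)}$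 for every $\gamma\in E$, and (2) $f\in F_{B(\gamma)}$ for every $\gamma\notin E$. *)

theory Defs
  imports "HOL-Analysis.Analysis"
begin

text \<open>The plane R^2 is modelled as the type complex (a 2-dimensional Euclidean space),
  so that the rotation by angle theta is multiplication by the unit complex number e^(i theta).\<close>

type_synonym basis = "complex \<Rightarrow> complex set set"

definition differentiation_basis :: "basis \<Rightarrow> bool" where
  "differentiation_basis B \<longleftrightarrow>
     (\<forall>x. (\<forall>R\<in>B x. bounded R \<and> R \<in> sets lebesgue \<and> measure lebesgue R > 0 \<and> x \<in> R) \<and>
          (\<exists>Rk :: nat \<Rightarrow> complex set. (\<forall>k. Rk k \<in> B x) \<and> (\<lambda>k. diameter (Rk k)) \<longlonglongrightarrow> 0))"

definition translation_invariant :: "basis \<Rightarrow> bool" where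
  "translation_invariant B \<longleftrightarrow> (\<forall>x. B x = (\<lambda>R. (\<lambda>y. x + y) ` R) ` B 0)"

definition avg :: "(complex \<Rightarrow> real) \<Rightarrow> complex set \<Rightarrow> real" where
  "avg f R = (LINT y:R|lebesgue. f y) / measure lebesgue R"

definition upper_deriv :: "basis \<Rightarrow> (complex \<Rightarrow> real) \<Rightarrow> complex \<Rightarrow> ereal" where
  "upper_deriv B f x = (INF e\<in>{e::real. e > 0}. SUP R\<in>{R\<in>B x. diameter R < e}. ereal (avg f R))"

definition lower_deriv :: "basis \<Rightarrow> (complex \<Rightarrow> real) \<Rightarrow> complex \<Rightarrow> ereal" where
  "lower_deriv B f x = (SUP e\<in>{e::real. e > 0}. INF R\<in>{R\<in>B x. diameter R < e}. ereal (avg f R))"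

definition F_class :: "basis \<Rightarrow> (complex \<Rightarrow> real) set" where
  "F_class B = {f. integrable lebesgue f \<and>
      (AE x in lebesgue. upper_deriv B f x = ereal (f x) \<and> lower_deriv B f x = ereal (f x))}"

text \<open>Gamma_2: rotations, identified with the unit circle.\<close>
definition Gamma2 :: "complex set" where
  "Gamma2 = sphere 0 1"

definition rotated_basis :: "basis \<Rightarrow> complex \<Rightarrow> basis" where
  "rotated_basis B \<gamma> x = (\<lambda>R. (\<lambda>y. x + \<gamma> * (y - x)) ` R) ` B x"

definition W_set :: "basis \<Rightarrow> complex set \<Rightarrow> bool" where
  "W_set B E \<longleftrightarrow> E \<subseteq> Gamma2 \<and>
     (\<exists>f. integrable lebesgue f \<and>
          (\<forall>\<gamma>\<in>E. f \<notin> F_class (rotated_basis B \<gamma>)) \<and>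
          (\<forall>\<gamma>\<in>Gamma2 - E. f \<in> F_class (rotated_basis B \<gamma>)))"

definition arc_dist :: "complex \<Rightarrow> complex \<Rightarrow> real" where
  "arc_dist z w = \<bar>Arg (z / w)\<bar>"

definition open_Gamma2 :: "complex set \<Rightarrow> bool" where
  "open_Gamma2 U \<longleftrightarrow> U \<subseteq> Gamma2 \<and>
     (\<forall>z\<in>U. \<exists>e>0. \<forall>w\<in>Gamma2. arc_dist z w < e \<longrightarrow> w \<in> U)"

definition G_delta_sigma_Gamma2 :: "complex set \<Rightarrow> bool" where
  "G_delta_sigma_Gamma2 E \<longleftrightarrow>
     (\<exists>U :: nat \<Rightarrow> nat \<Rightarrow> complex set. (\<forall>n m. open_Gamma2 (U n m)) \<and>
        E = (\<Union>n. \<Inter>m. U n m))"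

end

theory Submission
  imports Defs
begin

text \<open>
  By translation invariance, the upper derivative of \<open>\<integral>h\<close> at x with respect to the basis
  rotated by g is the limit, as e \<rightarrow> 0, of the supremum of the averages of h over the sets
  x + g R with R \<in> B 0 and diam R < e. The integral of h over x + g R depends continuously on
  (g, x), so this supremum is lower semicontinuous. Hence for rational levels q the sets of
  points x in a ball where h x < q but some average at scale 1/(N+1) exceeds q are open, and
  their measure is lower semicontinuous in g. The basis rotated by g fails to differentiate
  \<open>\<integral>f\<close> iff, for h = f or h = -f and some q, radius and j, all these measures exceed 1/(j+1);
  each such condition defines an open set of rotations, so the failure set is G\<delta>\<sigma>.
\<close>

subsection \<open>Rotation invariance of Lebesgue measure on the complex plane\<close>

text \<open>The library proves invariance under orthogonal maps only for \<open>real^'n\<close>, so we transfer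
  Lebesgue measure along the coordinate isomorphism between complex and \<open>real^2\<close>.\<close>

definition complex_of_vec2 :: "real^2 \<Rightarrow> complex" where
  "complex_of_vec2 v = Complex (v$1) (v$2)"

definition vec2_of_complex :: "complex \<Rightarrow> real^2" where
  "vec2_of_complex z = vector [Re z, Im z]"

lemma vec2_of_complex_of_vec2 [simp]: "vec2_of_complex (complex_of_vec2 v) = v"
  unfolding vec2_of_complex_def complex_of_vec2_def by (simp add: vec_eq_iff forall_2)

lemma complex_of_vec2_of_complex [simp]: "complex_of_vec2 (vec2_of_complex z) = z"
  unfolding vec2_of_complex_def complex_of_vec2_def by (simp add: complex_eq_iff)

lemma vimage_complex_of_vec2: "complex_of_vec2 -` C = vec2_of_complex ` C"
  by (auto simp: image_iff) (metis complex_of_vec2_of_complex vec2_of_complex_of_vec2)+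

lemma borel_measurable_complex_of_vec2: "complex_of_vec2 \<in> borel_measurable borel"
  unfolding complex_of_vec2_def by (intro borel_measurable_continuous_onI continuous_intros)

lemma linear_vec2_of_complex: "linear vec2_of_complex"
  by (rule linearI) (auto simp: vec2_of_complex_def vec_eq_iff forall_2)

lemma linear_complex_of_vec2: "linear complex_of_vec2"
  by (rule linearI) (auto simp: complex_of_vec2_def complex_eq_iff)

lemma norm_vec2_of_complex [simp]: "norm (vec2_of_complex z) = norm z"
  by (simp add: vec2_of_complex_def norm_eq_sqrt_inner inner_vec_def UNIV_2 cmod_def
      power2_eq_square inner_complex_def)

lemma lborel_complex_eq_distr_vec2: "(lborel :: complex measure) = distr lborel borel complex_of_vec2"
proof (rule lborel_eqI)
  fix l u :: complex
  assume le: "\<And>b. b \<in> Basis \<Longrightarrow> l \<bullet> b \<le> u \<bullet> b"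
  have "complex_of_vec2 -` box l u = box (vec2_of_complex l) (vec2_of_complex u)"
    by (auto simp: mem_box_cart mem_box Basis_complex_def complex_of_vec2_def vec2_of_complex_def forall_2)
  moreover have "\<forall>b\<in>Basis. vec2_of_complex l \<bullet> b \<le> vec2_of_complex u \<bullet> b"
    using le[of 1] le[of \<i>]
    by (auto simp: Basis_complex_def Basis_vec_def inner_axis vec2_of_complex_def forall_2)
  moreover have "(\<Prod>b\<in>Basis. (vec2_of_complex u - vec2_of_complex l) \<bullet> b) = (Re u - Re l) * (Im u - Im l)"
    by (simp add: Basis_vec_def cart_eq_inner_axis axis_eq_axis prod.UNION_disjoint UNIV_2)
       (simp add: inner_axis vec2_of_complex_def)
  ultimately show "emeasure (distr lborel borel complex_of_vec2) (box l u) = (\<Prod>b\<in>Basis. (u - l) \<bullet> b)"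
    by (simp add: emeasure_distr emeasure_lborel_box_eq Basis_complex_def
        borel_measurable_complex_of_vec2)
qed simp

lemma emeasure_vec2_of_complex_image:
  assumes "C \<in> sets borel"
  shows "emeasure lborel (vec2_of_complex ` C) = emeasure lborel C"
proof -
  have "emeasure (distr lborel borel complex_of_vec2) C = emeasure lborel (vec2_of_complex ` C)"
    using assms by (simp add: emeasure_distr vimage_complex_of_vec2 borel_measurable_complex_of_vec2)
  then show ?thesis
    by (simp flip: lborel_complex_eq_distr_vec2)
qed

lemma measure_vec2_of_complex_image:
  assumes "compact K"
  shows "measure lebesgue (vec2_of_complex ` K) = measure lebesgue K"
proof -
  have "compact (vec2_of_complex ` K)"
    using assms linear_vec2_of_complex linear_continuous_on linear_linear
    by (blast intro: compact_continuous_image)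
  then show ?thesis
    using assms by (simp add: measure_completion compact_imp_closed borel_closed measure_def
        emeasure_vec2_of_complex_image)
qed

lemma orthogonal_transformation_vec2_mult:
  assumes "norm \<gamma> = 1"
  shows "orthogonal_transformation (\<lambda>v. vec2_of_complex (\<gamma> * complex_of_vec2 v))"
  unfolding orthogonal_transformation
proof
  show "linear (\<lambda>v. vec2_of_complex (\<gamma> * complex_of_vec2 v))"
    by (rule linearI) (simp_all add: linear_add[OF linear_vec2_of_complex] linear_cmul[OF linear_vec2_of_complex]
        linear_add[OF linear_complex_of_vec2] linear_cmul[OF linear_complex_of_vec2] distrib_left)
  show "\<forall>v. norm (vec2_of_complex (\<gamma> * complex_of_vec2 v)) = norm v"
    using assms by (metis norm_vec2_of_complex norm_mult mult_1 vec2_of_complex_of_vec2)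
qed

lemma measure_unit_mult_cbox:
  fixes a b :: complex
  assumes "norm \<gamma> = 1"
  shows "measure lebesgue ((*) \<gamma> ` cbox a b) = measure lebesgue (cbox a b)"
proof -
  let ?r = "\<lambda>v. vec2_of_complex (\<gamma> * complex_of_vec2 v)"
  have "compact ((*) \<gamma> ` cbox a b)"
    by (intro compact_continuous_image continuous_intros) auto
  then have "measure lebesgue ((*) \<gamma> ` cbox a b) = measure lebesgue (?r ` vec2_of_complex ` cbox a b)"
    by (simp add: measure_vec2_of_complex_image[symmetric] image_image)
  also have "\<dots> = measure lebesgue (vec2_of_complex ` cbox a b)"
    using measurable_linear_image_interval[OF linear_vec2_of_complex, of a b]
    by (rule measure_orthogonal_image[OF orthogonal_transformation_vec2_mult[OF assms]])
  also have "\<dots> = measure lebesgue (cbox a b)"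
    by (simp add: measure_vec2_of_complex_image)
  finally show ?thesis .
qed

lemma
  fixes S :: "complex set"
  assumes "norm \<gamma> = 1" and "S \<in> lmeasurable"
  shows lmeasurable_unit_mult_image: "(*) \<gamma> ` S \<in> lmeasurable"
    and measure_unit_mult_image: "measure lebesgue ((*) \<gamma> ` S) = measure lebesgue S"
  using measure_linear_sufficient[of "(*) \<gamma>" S 1] measure_unit_mult_cbox assms
    bounded_linear_mult_right[of \<gamma>] linear_linear by auto

subsection \<open>Continuity of integrals over moving sets\<close>

definition rigid_image :: "complex \<Rightarrow> complex \<Rightarrow> complex set \<Rightarrow> complex set" where
  "rigid_image g x S = (\<lambda>z. x + g * z) ` S"

lemma
  assumes "norm g = 1" and "S \<in> lmeasurable"
  shows lmeasurable_rigid_image: "rigid_image g x S \<in> lmeasurable"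
    and measure_rigid_image: "measure lebesgue (rigid_image g x S) = measure lebesgue S"
proof -
  have eq: "rigid_image g x S = (+) x ` (*) g ` S"
    unfolding rigid_image_def by (simp add: image_image)
  show "rigid_image g x S \<in> lmeasurable" "measure lebesgue (rigid_image g x S) = measure lebesgue S"
    unfolding eq using assms
    by (simp_all add: measurable_translation lmeasurable_unit_mult_image measure_translation
        measure_unit_mult_image)
qed

lemma diameter_isometric_image:
  assumes "\<And>a b. a \<in> S \<Longrightarrow> b \<in> S \<Longrightarrow> dist (T a) (T b) = dist a b"
  shows "diameter (T ` S) = diameter S"
proof -
  have "(\<lambda>(a,b). dist a b) ` (T ` S \<times> T ` S) = (\<lambda>(a,b). dist a b) ` (S \<times> S)"
    using assms by (fastforce simp: image_iff)
  then show ?thesis unfolding diameter_def by simp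
qed

lemma diameter_rigid_image: "norm g = 1 \<Longrightarrow> diameter (rigid_image g x S) = diameter S"
  unfolding rigid_image_def
  by (rule diameter_isometric_image) (simp add: dist_norm norm_mult flip: right_diff_distrib)

lemma integral_abs_indicator_small:
  fixes f :: "'a \<Rightarrow> real"
  assumes f: "integrable M f" and "e > 0"
  obtains d where "d > 0"
    "\<And>A. A \<in> fmeasurable M \<Longrightarrow> measure M A < d \<Longrightarrow> (\<integral>y. indicator A y * \<bar>f y\<bar> \<partial>M) < e"
proof -
  define g where "g N x = max (\<bar>f x\<bar> - real N) 0" for N :: nat and x
  have g_meas: "g N \<in> borel_measurable M" for N
    unfolding g_def using f by measurable
  have g_int: "integrable M (g N)" for N
    by (rule Bochner_Integration.integrable_bound[OF integrable_abs[OF f] g_meas]) (auto simp: g_def)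
  have "(\<lambda>N. \<integral>x. g N x \<partial>M) \<longlonglongrightarrow> (\<integral>x. 0 \<partial>M)"
  proof (rule integral_dominated_convergence[where w = "\<lambda>x. \<bar>f x\<bar>"])
    show "AE x in M. (\<lambda>N. g N x) \<longlonglongrightarrow> 0"
    proof (rule AE_I2)
      fix x
      obtain M0 :: nat where "\<bar>f x\<bar> \<le> real M0" using real_arch_simple by blast
      then have "\<forall>N\<ge>M0. g N x = 0" unfolding g_def by auto
      then show "(\<lambda>N. g N x) \<longlonglongrightarrow> 0"
        by (intro tendsto_eventually) (auto simp: eventually_sequentially)
    qed
  qed (use f g_meas in \<open>auto simp: g_def\<close>)
  then have "\<forall>\<^sub>F N in sequentially. (\<integral>x. g N x \<partial>M) < e/2"
    using \<open>e > 0\<close> by (intro order_tendstoD(2)) auto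
  then obtain N where N: "(\<integral>x. g N x \<partial>M) < e/2"
    using eventually_sequentially by auto
  define d where "d = e / (2 * (real N + 1))"
  have "d > 0"
    using \<open>e > 0\<close> by (simp add: d_def)
  show thesis
  proof (rule that[OF \<open>d > 0\<close>])
    fix A assume A: "A \<in> fmeasurable M" "measure M A < d"
    have A_int: "integrable M (indicator A :: 'a \<Rightarrow> real)"
      using A by (simp add: fmeasurable_def)
    have "(\<integral>y. indicator A y * \<bar>f y\<bar> \<partial>M) \<le> (\<integral>y. g N y + real N * indicator A y \<partial>M)"
    proof (rule integral_mono)
      show "integrable M (\<lambda>y. indicator A y * \<bar>f y\<bar>)"
        using integrable_mult_indicator[OF fmeasurableD[OF A(1)] integrable_abs[OF f]] by simp
      show "integrable M (\<lambda>y. g N y + real N * indicator A y)"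
        using g_int A_int by simp
    qed (use g_int A_int in \<open>auto simp: g_def indicator_def\<close>)
    also have "\<dots> = (\<integral>y. g N y \<partial>M) + real N * measure M A"
      using A g_int by (simp add: fmeasurable_def)
    also have "\<dots> < e/2 + (real N + 1) * d"
    proof -
      have "real N * measure M A \<le> real N * d"
        using A by (intro mult_left_mono) auto
      then show ?thesis
        using N \<open>d > 0\<close> by (simp add: algebra_simps)
    qed
    also have "\<dots> = e"
      by (simp add: d_def field_simps)
    finally show "(\<integral>y. indicator A y * \<bar>f y\<bar> \<partial>M) < e" .
  qed
qed

lemma abs_set_integral_diff_le:
  fixes f :: "'a \<Rightarrow> real"
  assumes f: "integrable M f" and S: "S \<in> sets M" and T: "T \<in> sets M"
  shows "\<bar>(\<integral>y\<in>S. f y \<partial>M) - (\<integral>y\<in>T. f y \<partial>M)\<bar> \<le>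
         (\<integral>y. indicator ((S - T) \<union> (T - S)) y * \<bar>f y\<bar> \<partial>M)"
proof -
  have iS: "integrable M (\<lambda>y. indicator S y * f y)"
    using integrable_mult_indicator[OF S f] by simp
  have iT: "integrable M (\<lambda>y. indicator T y * f y)"
    using integrable_mult_indicator[OF T f] by simp
  have "(S - T) \<union> (T - S) \<in> sets M"
    using S T by auto
  from integrable_mult_indicator[OF this integrable_abs[OF f]]
  have iD: "integrable M (\<lambda>y. indicator ((S - T) \<union> (T - S)) y * \<bar>f y\<bar>)"
    by simp
  have "(\<integral>y\<in>S. f y \<partial>M) - (\<integral>y\<in>T. f y \<partial>M) = (\<integral>y. indicator S y * f y - indicator T y * f y \<partial>M)"
    unfolding set_lebesgue_integral_def using iS iT by simp
  also have "\<bar>\<dots>\<bar> \<le> (\<integral>y. \<bar>indicator S y * f y - indicator T y * f y\<bar> \<partial>M)"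
    using integral_norm_bound[where f = "\<lambda>y. indicator S y * f y - indicator T y * f y"] by simp
  also have "\<dots> \<le> (\<integral>y. indicator ((S - T) \<union> (T - S)) y * \<bar>f y\<bar> \<partial>M)"
    using iS iT iD by (intro integral_mono) (auto simp: indicator_def)
  finally show ?thesis .
qed

lemma eventually_measure_rigid_image_Diff_less:
  assumes S: "S \<in> lmeasurable" "bounded S"
    and g: "gk \<longlonglongrightarrow> g0" "\<And>k. norm (gk k) = 1" "norm g0 = 1"
    and x: "xk \<longlonglongrightarrow> x0" and "d > 0"
  shows "\<forall>\<^sub>F k in sequentially.
           measure lebesgue (rigid_image (gk k) (xk k) S - rigid_image g0 x0 S) < d"
proof -
  obtain K where K: "closed K" "K \<subseteq> S" "S - K \<in> lmeasurable" "emeasure lebesgue (S - K) < ennreal (d/2)"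
    using sets_lebesgue_inner_closed[OF fmeasurableD[OF S(1)], of "d/2"] \<open>d > 0\<close> by auto
  obtain U where U: "open U" "S \<subseteq> U" "U - S \<in> lmeasurable" "emeasure lebesgue (U - S) < ennreal (d/2)"
    using sets_lebesgue_outer_open[OF fmeasurableD[OF S(1)], of "d/2"] \<open>d > 0\<close> by auto
  have "compact K"
    using K S(2) bounded_subset compact_eq_bounded_closed by blast
  then obtain r where "r > 0" and r: "(\<Union>z\<in>K. ball z r) \<subseteq> U"
    using compact_subset_open_imp_ball_epsilon_subset K(2) U(1,2) by (metis subset_trans)
  obtain M where M: "\<And>z. z \<in> K \<Longrightarrow> norm z \<le> M"
    using \<open>compact K\<close> compact_imp_bounded bounded_iff by metis
  \<comment> \<open>on the compact core K the motions converge uniformly, so they eventually map K into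
      the image of U under the limit motion\<close>
  have "(\<lambda>k. norm (xk k - x0) + norm (gk k - g0) * M) \<longlonglongrightarrow> norm (x0 - x0) + norm (g0 - g0) * M"
    by (intro tendsto_intros x g(1))
  then have "\<forall>\<^sub>F k in sequentially. norm (xk k - x0) + norm (gk k - g0) * M < r"
    using \<open>r > 0\<close> by (intro order_tendstoD(2)) auto
  then show ?thesis
  proof (rule eventually_mono)
    fix k assume k: "norm (xk k - x0) + norm (gk k - g0) * M < r"
    have "rigid_image (gk k) (xk k) S - rigid_image g0 x0 S
            \<subseteq> rigid_image (gk k) (xk k) (S - K) \<union> rigid_image g0 x0 (U - S)"
    proof
      fix w assume w: "w \<in> rigid_image (gk k) (xk k) S - rigid_image g0 x0 S"
      then obtain z where z: "z \<in> S" "w = xk k + gk k * z"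
        unfolding rigid_image_def by auto
      show "w \<in> rigid_image (gk k) (xk k) (S - K) \<union> rigid_image g0 x0 (U - S)"
      proof (cases "z \<in> K")
        case True
        define u where "u = (w - x0) / g0"
        have w_eq: "w = x0 + g0 * u"
          using g(3) by (auto simp: u_def)
        have "u - z = ((xk k - x0) + (gk k - g0) * z) / g0"
          using g(3) by (cases "g0 = 0") (auto simp: u_def z(2) field_simps)
        then have "dist z u = norm ((xk k - x0) + (gk k - g0) * z)"
          using g(3) by (simp add: dist_norm norm_minus_commute norm_divide)
        also have "\<dots> \<le> norm (xk k - x0) + norm (gk k - g0) * M"
          using M[OF True] by (intro order.trans[OF norm_triangle_ineq] add_left_mono)
            (simp add: norm_mult mult_left_mono)
        finally have "u \<in> U"
          using r True k by fastforce
        moreover have "u \<notin> S"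
          using w w_eq unfolding rigid_image_def by auto
        ultimately show ?thesis
          using w_eq unfolding rigid_image_def by auto
      next
        case False
        then show ?thesis
          using z unfolding rigid_image_def by auto
      qed
    qed
    then have "measure lebesgue (rigid_image (gk k) (xk k) S - rigid_image g0 x0 S)
                 \<le> measure lebesgue (rigid_image (gk k) (xk k) (S - K) \<union> rigid_image g0 x0 (U - S))"
      using K(3) U(3) S g by (intro measure_mono_fmeasurable sets.Diff fmeasurable.Un
          fmeasurableD lmeasurable_rigid_image)
    also have "\<dots> \<le> measure lebesgue (S - K) + measure lebesgue (U - S)"
      using measure_Un_le[of "rigid_image (gk k) (xk k) (S - K)" lebesgue "rigid_image g0 x0 (U - S)"]
        K(3) U(3) g by (simp add: lmeasurable_rigid_image fmeasurableD measure_rigid_image)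
    also have "\<dots> < d"
      using K(3,4) U(3,4) by (simp add: emeasure_eq_measure2 ennreal_less_iff)
    finally show "measure lebesgue (rigid_image (gk k) (xk k) S - rigid_image g0 x0 S) < d" .
  qed
qed

lemma measure_Diff_swap:
  assumes A: "A \<in> fmeasurable M" and B: "B \<in> fmeasurable M" and "measure M A = measure M B"
  shows "measure M (A - B) = measure M (B - A)"
proof -
  have "A - B = A - A \<inter> B" "B - A = B - A \<inter> B"
    by auto
  then show ?thesis
    using assms measurable_measure_Diff[OF A, of "A \<inter> B"] measurable_measure_Diff[OF B, of "A \<inter> B"]
    by (simp add: fmeasurableD)
qed

lemma set_integral_rigid_image_tendsto:
  fixes f :: "complex \<Rightarrow> real"
  assumes f: "integrable lebesgue f" and S: "S \<in> lmeasurable" "bounded S"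
    and g: "gk \<longlonglongrightarrow> g0" "\<And>k. norm (gk k) = 1" "norm g0 = 1" and x: "xk \<longlonglongrightarrow> x0"
  shows "(\<lambda>k. \<integral>y\<in>rigid_image (gk k) (xk k) S. f y \<partial>lebesgue)
           \<longlonglongrightarrow> (\<integral>y\<in>rigid_image g0 x0 S. f y \<partial>lebesgue)"
proof (rule tendstoI)
  fix e :: real assume "e > 0"
  then obtain d where "d > 0" and d: "\<And>A. A \<in> lmeasurable \<Longrightarrow> measure lebesgue A < d \<Longrightarrow>
      (\<integral>y. indicator A y * \<bar>f y\<bar> \<partial>lebesgue) < e"
    using integral_abs_indicator_small[OF f] by metis
  have "\<forall>\<^sub>F k in sequentially.
          measure lebesgue (rigid_image (gk k) (xk k) S - rigid_image g0 x0 S) < d/2"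
    using \<open>d > 0\<close> by (intro eventually_measure_rigid_image_Diff_less S g x) auto
  then show "\<forall>\<^sub>F k in sequentially. dist (\<integral>y\<in>rigid_image (gk k) (xk k) S. f y \<partial>lebesgue)
                                     (\<integral>y\<in>rigid_image g0 x0 S. f y \<partial>lebesgue) < e"
  proof (rule eventually_mono)
    fix k
    define A where "A = rigid_image (gk k) (xk k) S"
    define B where "B = rigid_image g0 x0 S"
    assume "measure lebesgue (rigid_image (gk k) (xk k) S - rigid_image g0 x0 S) < d/2"
    then have AB: "measure lebesgue (A - B) < d/2"
      by (simp add: A_def B_def)
    have A: "A \<in> lmeasurable" and B: "B \<in> lmeasurable"
      and "measure lebesgue A = measure lebesgue B"
      using S g by (simp_all add: A_def B_def lmeasurable_rigid_image measure_rigid_image)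
    then have "measure lebesgue (B - A) = measure lebesgue (A - B)"
      using A B by (simp add: measure_Diff_swap)
    then have "measure lebesgue ((A - B) \<union> (B - A)) < d"
      using measure_Un_le[of "A - B" lebesgue "B - A"] AB A B by (simp add: fmeasurableD)
    then have "(\<integral>y. indicator ((A - B) \<union> (B - A)) y * \<bar>f y\<bar> \<partial>lebesgue) < e"
      using A B by (intro d) auto
    then show "dist (\<integral>y\<in>A. f y \<partial>lebesgue) (\<integral>y\<in>B. f y \<partial>lebesgue) < e"
      using abs_set_integral_diff_le[OF f, of A B] A B by (simp add: dist_real_def fmeasurableD)
  qed
qed

lemma avg_rigid_image_tendsto:
  fixes f :: "complex \<Rightarrow> real"
  assumes f: "integrable lebesgue f" and S: "S \<in> lmeasurable" "bounded S"
    and g: "gk \<longlonglongrightarrow> g0" "\<And>k. norm (gk k) = 1" "norm g0 = 1" and x: "xk \<longlonglongrightarrow> x0"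
  shows "(\<lambda>k. avg f (rigid_image (gk k) (xk k) S)) \<longlonglongrightarrow> avg f (rigid_image g0 x0 S)"
  unfolding avg_def using g S
  by (simp add: measure_rigid_image divide_inverse
      tendsto_mult_right set_integral_rigid_image_tendsto[OF f S g x])

subsection \<open>Upper derivatives with respect to rotated bases\<close>

lemma
  assumes "differentiation_basis B" and "R \<in> B x"
  shows differentiation_basis_lmeasurable: "R \<in> lmeasurable"
    and differentiation_basis_bounded: "bounded R"
  using assms bounded_set_imp_lmeasurable unfolding differentiation_basis_def by auto

lemma differentiation_basis_small:
  assumes "differentiation_basis B" and "e > 0"
  obtains R where "R \<in> B x" "diameter R < e"
proof -
  obtain Rk where "\<And>k. Rk k \<in> B x" "(\<lambda>k. diameter (Rk k)) \<longlonglongrightarrow> 0"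
    using assms(1) unfolding differentiation_basis_def by blast
  moreover from this(2) obtain k where "diameter (Rk k) < e"
    using \<open>e > 0\<close> by (metis eventually_sequentially order_refl order_tendstoD(2))
  ultimately show thesis
    using that by blast
qed

lemma rotated_basis_small:
  assumes "differentiation_basis B" and "norm g = 1" and "e > 0"
  shows "\<exists>R\<in>rotated_basis B g x. diameter R < e"
proof -
  obtain R where R: "R \<in> B x" "diameter R < e"
    using differentiation_basis_small[OF assms(1,3)] by blast
  have "diameter ((\<lambda>y. x + g * (y - x)) ` R) = diameter R"
    using assms(2) by (intro diameter_isometric_image)
      (simp add: dist_norm norm_mult flip: right_diff_distrib)
  then show ?thesis
    using R unfolding rotated_basis_def by (intro bexI[OF _ imageI[OF R(1)]]) simp
qed

lemma rotated_basis_eq_rigid_image: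
  assumes "translation_invariant B"
  shows "rotated_basis B g x = rigid_image g x ` B 0"
proof -
  have "B x = (\<lambda>R. (\<lambda>y. x + y) ` R) ` B 0"
    using assms unfolding translation_invariant_def by blast
  then show ?thesis
    unfolding rotated_basis_def rigid_image_def by (simp add: image_image)
qed

lemma lower_deriv_eq_uminus_upper_deriv:
  "lower_deriv B h x = - upper_deriv B (\<lambda>y. - h y) x"
proof -
  have "avg (\<lambda>y. - h y) R = - avg h R" for R
    unfolding avg_def set_lebesgue_integral_def by simp
  then show ?thesis
    unfolding lower_deriv_def upper_deriv_def
    by (simp add: ereal_SUP_uminus_eq[symmetric] ereal_INF_uminus_eq[symmetric])
qed

lemma lower_deriv_le_upper_deriv:
  assumes small: "\<And>e. e > 0 \<Longrightarrow> \<exists>R\<in>B x. diameter R < e"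
  shows "lower_deriv B h x \<le> upper_deriv B h x"
  unfolding lower_deriv_def upper_deriv_def
proof (intro SUP_least INF_greatest)
  fix e1 e2 :: real assume "e1 \<in> {e. e > 0}" "e2 \<in> {e. e > 0}"
  then obtain R where R: "R \<in> B x" "diameter R < min e1 e2"
    using small by (metis min_less_iff_conj mem_Collect_eq)
  then have "(INF R\<in>{R \<in> B x. diameter R < e1}. ereal (avg h R)) \<le> ereal (avg h R)"
    by (intro INF_lower) auto
  also have "\<dots> \<le> (SUP R\<in>{R \<in> B x. diameter R < e2}. ereal (avg h R))"
    using R by (intro SUP_upper) auto
  finally show "(INF R\<in>{R \<in> B x. diameter R < e1}. ereal (avg h R))
                  \<le> (SUP R\<in>{R \<in> B x. diameter R < e2}. ereal (avg h R))" .
qed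

lemma ereal_eq_iff_le_and_uminus_le:
  fixes U V :: ereal
  assumes "- V \<le> U"
  shows "U = ereal a \<and> - V = ereal a \<longleftrightarrow> U \<le> ereal a \<and> V \<le> ereal (- a)"
proof
  assume "U \<le> ereal a \<and> V \<le> ereal (- a)"
  then have "U \<le> ereal a" "ereal a \<le> - V"
    by (cases V; simp)+
  then show "U = ereal a \<and> - V = ereal a"
    using assms by auto
qed (auto simp: ereal_uminus_eq_reorder)

lemma F_class_iff_upper_deriv_le:
  assumes f: "integrable lebesgue f" and small: "\<And>x e. e > 0 \<Longrightarrow> \<exists>R\<in>B x. diameter R < e"
  shows "f \<in> F_class B \<longleftrightarrow> (AE x in lebesgue. upper_deriv B f x \<le> ereal (f x)) \<and>
                             (AE x in lebesgue. upper_deriv B (\<lambda>y. - f y) x \<le> ereal (- f x))"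
proof -
  have "upper_deriv B f x = ereal (f x) \<and> lower_deriv B f x = ereal (f x) \<longleftrightarrow>
        upper_deriv B f x \<le> ereal (f x) \<and> upper_deriv B (\<lambda>y. - f y) x \<le> ereal (- f x)" for x
    using lower_deriv_le_upper_deriv[where x = x and h = f, OF small]
    unfolding lower_deriv_eq_uminus_upper_deriv by (rule ereal_eq_iff_le_and_uminus_le)
  then have "(AE x in lebesgue. upper_deriv B f x = ereal (f x) \<and> lower_deriv B f x = ereal (f x)) \<longleftrightarrow>
      (AE x in lebesgue. upper_deriv B f x \<le> ereal (f x) \<and> upper_deriv B (\<lambda>y. - f y) x \<le> ereal (- f x))"
    by (simp only:)
  then show ?thesis
    by (simp only: F_class_def mem_Collect_eq f simp_thms AE_conj_iff)
qed

definition sup_avg :: "basis \<Rightarrow> (complex \<Rightarrow> real) \<Rightarrow> complex \<Rightarrow> complex \<Rightarrow> real \<Rightarrow> ereal" where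
  "sup_avg B h g x e = (SUP R\<in>{R\<in>B 0. diameter R < e}. ereal (avg h (rigid_image g x R)))"

lemma sup_avg_mono: "e1 \<le> e2 \<Longrightarrow> sup_avg B h g x e1 \<le> sup_avg B h g x e2"
  unfolding sup_avg_def by (rule SUP_subset_mono) auto

lemma upper_deriv_rotated_basis:
  assumes "translation_invariant B" and "norm g = 1"
  shows "upper_deriv (rotated_basis B g) h x = (INF e\<in>{e. e > 0}. sup_avg B h g x e)"
proof -
  have "{R \<in> rotated_basis B g x. diameter R < e} = rigid_image g x ` {R\<in>B 0. diameter R < e}" for e
    unfolding rotated_basis_eq_rigid_image[OF assms(1)] using diameter_rigid_image[OF assms(2)] by auto
  then show ?thesis
    unfolding upper_deriv_def sup_avg_def by (simp add: image_image)
qed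

lemma less_upper_deriv_rotated_basis_iff:
  assumes "translation_invariant B" and "norm g = 1"
  shows "ereal (h x) < upper_deriv (rotated_basis B g) h x \<longleftrightarrow>
         (\<exists>q::rat. h x < of_rat q \<and> (\<forall>n. ereal (of_rat q) < sup_avg B h g x (inverse (real (Suc n)))))"
  unfolding upper_deriv_rotated_basis[OF assms]
proof
  assume "ereal (h x) < (INF e\<in>{e. e > 0}. sup_avg B h g x e)"
  then obtain b where b: "h x < b" "ereal b < (INF e\<in>{e. e > 0}. sup_avg B h g x e)"
    by (metis ereal_dense2 less_ereal.simps(1))
  obtain q :: rat where q: "h x < of_rat q" "of_rat q < b"
    using Rats_dense_in_real[OF b(1)] by (metis Rats_cases)
  have "ereal (of_rat q) < sup_avg B h g x (inverse (real (Suc n)))" for n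
  proof -
    have "ereal (of_rat q) < ereal b"
      using q(2) by simp
    also note b(2)
    also have "(INF e\<in>{e. e > 0}. sup_avg B h g x e) \<le> sup_avg B h g x (inverse (real (Suc n)))"
      by (rule INF_lower) simp
    finally show ?thesis .
  qed
  then show "\<exists>q::rat. h x < of_rat q \<and> (\<forall>n. ereal (of_rat q) < sup_avg B h g x (inverse (real (Suc n))))"
    using q by blast
next
  assume "\<exists>q::rat. h x < of_rat q \<and> (\<forall>n. ereal (of_rat q) < sup_avg B h g x (inverse (real (Suc n))))"
  then obtain q :: rat where q: "h x < of_rat q" "\<And>n. ereal (of_rat q) < sup_avg B h g x (inverse (real (Suc n)))"
    by blast
  have "ereal (of_rat q) \<le> (INF e\<in>{e. e > 0}. sup_avg B h g x e)"
  proof (rule INF_greatest)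
    fix e :: real assume "e \<in> {e. e > 0}"
    then obtain n where "inverse (real (Suc n)) < e"
      using reals_Archimedean by auto
    then show "ereal (of_rat q) \<le> sup_avg B h g x e"
      using q(2)[of n] sup_avg_mono[of "inverse (real (Suc n))" e B h g x] by simp
  qed
  moreover have "ereal (h x) < ereal (of_rat q)"
    using q(1) by simp
  ultimately show "ereal (h x) < (INF e\<in>{e. e > 0}. sup_avg B h g x e)"
    by (rule order.strict_trans2[rotated])
qed

lemma open_less_sup_avg:
  fixes h :: "complex \<Rightarrow> real"
  assumes h: "integrable lebesgue h" and B: "differentiation_basis B" and g: "norm g = 1"
  shows "open {x. ereal q < sup_avg B h g x e}"
proof -
  have eq: "{x. ereal q < sup_avg B h g x e} = (\<Union>R\<in>{R\<in>B 0. diameter R < e}. {x. q < avg h (rigid_image g x R)})"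
    unfolding sup_avg_def less_SUP_iff by auto
  have "continuous_on UNIV (\<lambda>x. avg h (rigid_image g x R))" if "R \<in> B 0" for R
    using g differentiation_basis_lmeasurable[OF B that] differentiation_basis_bounded[OF B that]
    by (intro continuous_on_sequentiallyI avg_rigid_image_tendsto[OF h]) auto
  then show ?thesis
    unfolding eq by (intro open_UN ballI open_Collect_less continuous_on_const) auto
qed

lemma eventually_less_sup_avg:
  fixes h :: "complex \<Rightarrow> real"
  assumes h: "integrable lebesgue h" and B: "differentiation_basis B"
    and g: "gk \<longlonglongrightarrow> g0" "\<And>k. norm (gk k) = 1" "norm g0 = 1"
    and q: "ereal q < sup_avg B h g0 x e"
  shows "\<forall>\<^sub>F k in sequentially. ereal q < sup_avg B h (gk k) x e"
proof -
  obtain R where R: "R \<in> B 0" "diameter R < e" "q < avg h (rigid_image g0 x R)"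
    using q unfolding sup_avg_def less_SUP_iff by auto
  have "(\<lambda>k. avg h (rigid_image (gk k) x R)) \<longlonglongrightarrow> avg h (rigid_image g0 x R)"
    using differentiation_basis_lmeasurable[OF B R(1)] differentiation_basis_bounded[OF B R(1)]
    by (intro avg_rigid_image_tendsto[OF h _ _ g]) auto
  then have "\<forall>\<^sub>F k in sequentially. q < avg h (rigid_image (gk k) x R)"
    using R(3) by (rule order_tendstoD(1))
  then show ?thesis
  proof (rule eventually_mono)
    fix k assume "q < avg h (rigid_image (gk k) x R)"
    also have "ereal (avg h (rigid_image (gk k) x R)) \<le> sup_avg B h (gk k) x e"
      unfolding sup_avg_def using R by (intro SUP_upper) auto
    finally show "ereal q < sup_avg B h (gk k) x e"
      by simp
  qed
qed

text \<open>The set of x with \<open>h x < upper_deriv\<close> is the union over rational q and k of the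
  intersections over N of these sets.\<close>

definition excess_set :: "basis \<Rightarrow> (complex \<Rightarrow> real) \<Rightarrow> complex \<Rightarrow> real \<Rightarrow> nat \<Rightarrow> nat \<Rightarrow> complex set" where
  "excess_set B h g q k N =
     {x. h x < q} \<inter> ball 0 (real k) \<inter> {x. ereal q < sup_avg B h g x (inverse (real (Suc N)))}"

lemma lmeasurable_excess_set:
  fixes h :: "complex \<Rightarrow> real"
  assumes h: "integrable lebesgue h" and B: "differentiation_basis B" and g: "norm g = 1"
  shows "excess_set B h g q k N \<in> lmeasurable"
proof (rule fmeasurableI2[OF lmeasurable_ball[of 0 "real k"]])
  have "h \<in> borel_measurable lebesgue"
    using h by auto
  then have "{x. h x < q} \<in> sets lebesgue"
    unfolding borel_measurable_iff_less by simp
  moreover have "open {x. ereal q < sup_avg B h g x (inverse (real (Suc N)))}"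
    using open_less_sup_avg[OF h B g] .
  ultimately show "excess_set B h g q k N \<in> sets lebesgue"
    unfolding excess_set_def
    by (intro sets.Int sets_completionI_sets[OF borel_open]) auto
qed (auto simp: excess_set_def)

lemma excess_set_antimono: "N \<le> N' \<Longrightarrow> excess_set B h g q k N' \<subseteq> excess_set B h g q k N"
  unfolding excess_set_def
  using sup_avg_mono[of "inverse (real (Suc N'))" "inverse (real (Suc N))" B h g]
  by (auto intro: order.strict_trans2)

lemma measure_INT_decseq_eq_0_iff:
  assumes D: "\<And>N. D N \<in> fmeasurable M" and "decseq D"
  shows "measure M (\<Inter>N. D N) = 0 \<longleftrightarrow> (\<forall>j::nat. \<exists>N. measure M (D N) \<le> inverse (real (Suc j)))"
proof
  assume "measure M (\<Inter>N. D N) = 0"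
  moreover have "(\<lambda>N. measure M (D N)) \<longlonglongrightarrow> measure M (\<Inter>N. D N)"
    using D \<open>decseq D\<close> by (intro Lim_measure_decseq) (auto simp: fmeasurableD fmeasurableD2)
  ultimately have "\<forall>\<^sub>F N in sequentially. measure M (D N) < inverse (real (Suc j))" for j
    by (intro order_tendstoD(2)) auto
  then show "\<forall>j. \<exists>N. measure M (D N) \<le> inverse (real (Suc j))"
    unfolding eventually_sequentially by (blast intro: less_imp_le)
next
  assume small: "\<forall>j. \<exists>N. measure M (D N) \<le> inverse (real (Suc j))"
  have "measure M (\<Inter>N. D N) \<le> inverse (real (Suc j))" for j
  proof -
    obtain N where "measure M (D N) \<le> inverse (real (Suc j))"
      using small by blast
    moreover have "measure M (\<Inter>N. D N) \<le> measure M (D N)"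
      using D by (intro measure_mono_fmeasurable) (auto simp: fmeasurableD)
    ultimately show ?thesis
      by linarith
  qed
  then have "measure M (\<Inter>N. D N) \<le> 0"
    by (intro LIMSEQ_le_const[OF LIMSEQ_inverse_real_of_nat]) auto
  then show "measure M (\<Inter>N. D N) = 0"
    by (simp add: antisym)
qed

lemma AE_upper_deriv_rotated_basis_le_iff:
  fixes h :: "complex \<Rightarrow> real"
  assumes h: "integrable lebesgue h" and B: "differentiation_basis B"
    and TI: "translation_invariant B" and g: "norm g = 1"
  shows "(AE x in lebesgue. upper_deriv (rotated_basis B g) h x \<le> ereal (h x)) \<longleftrightarrow>
         (\<forall>(q::rat) (k::nat) (j::nat). \<exists>N.
            measure lebesgue (excess_set B h g (of_rat q) k N) \<le> inverse (real (Suc j)))"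
proof -
  define Z where "Z q k = (\<Inter>N. excess_set B h g (of_rat q) k N)" for q :: rat and k :: nat
  have D: "excess_set B h g q' k N \<in> lmeasurable" for q' k N
    by (rule lmeasurable_excess_set[OF h B g])
  have Z: "Z q k \<in> lmeasurable" for q k
    unfolding Z_def using D by (intro fmeasurable_INT[of UNIV 0]) (auto simp: fmeasurableD)
  have Z_iff: "x \<in> Z q k \<longleftrightarrow> h x < of_rat q \<and> norm x < real k \<and>
      (\<forall>N. ereal (of_rat q) < sup_avg B h g x (inverse (real (Suc N))))" for x q k
    unfolding Z_def excess_set_def by auto
  have "ereal (h x) < upper_deriv (rotated_basis B g) h x \<longleftrightarrow> (\<exists>q k. x \<in> Z q k)" for x
  proof -
    obtain k :: nat where "norm x < real k"
      using reals_Archimedean2 by blast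
    then show ?thesis
      unfolding less_upper_deriv_rotated_basis_iff[OF TI g] Z_iff by blast
  qed
  then have "upper_deriv (rotated_basis B g) h x \<le> ereal (h x) \<longleftrightarrow> (\<forall>q k. x \<notin> Z q k)" for x
    by (simp add: not_less[symmetric])
  then have "(AE x in lebesgue. upper_deriv (rotated_basis B g) h x \<le> ereal (h x)) \<longleftrightarrow>
             (\<forall>q k. AE x in lebesgue. x \<notin> Z q k)"
    by (simp add: AE_all_countable)
  also have "\<dots> \<longleftrightarrow> (\<forall>q k. measure lebesgue (Z q k) = 0)"
    using Z by (simp add: AE_iff_null_sets[symmetric] null_sets_def emeasure_eq_measure2 fmeasurableD)
  also have "\<dots> \<longleftrightarrow> (\<forall>q k j. \<exists>N. measure lebesgue (excess_set B h g (of_rat q) k N) \<le> inverse (real (Suc j)))"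
    unfolding Z_def using D excess_set_antimono
    by (simp add: measure_INT_decseq_eq_0_iff decseq_def)
  finally show ?thesis .
qed

lemma measure_le_of_subset_liminf:
  fixes A :: "nat \<Rightarrow> 'a set"
  assumes A: "\<And>m. A m \<in> sets M" "\<And>m. A m \<subseteq> C" and C: "C \<in> fmeasurable M"
    and le: "\<And>m. measure M (A m) \<le> c"
    and X: "X \<in> sets M" "X \<subseteq> (\<Union>M0. \<Inter>m\<in>{M0..}. A m)"
  shows "measure M X \<le> c"
proof -
  define I where "I M0 = (\<Inter>m\<in>{M0..}. A m)" for M0
  have I: "I M0 \<in> sets M" "I M0 \<subseteq> A M0" for M0
    unfolding I_def using A(1) by auto
  have "incseq I"
    unfolding I_def by (intro monoI INF_superset_mono) auto
  have UI: "(\<Union>M0. I M0) \<in> fmeasurable M"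
    using I A(2) by (intro fmeasurableI2[OF C]) blast+
  then have "(\<lambda>M0. measure M (I M0)) \<longlonglongrightarrow> measure M (\<Union>M0. I M0)"
    using I \<open>incseq I\<close> by (intro Lim_measure_incseq) (auto simp: fmeasurableD2)
  moreover have "measure M (I M0) \<le> c" for M0
    using measure_mono_fmeasurable[OF I(2) I(1) fmeasurableI2[OF C A(2)]] le[of M0] A(1)
    by (meson order.trans)
  ultimately have "measure M (\<Union>M0. I M0) \<le> c"
    by (intro LIMSEQ_le_const2) auto
  moreover have "measure M X \<le> measure M (\<Union>M0. I M0)"
    using X UI unfolding I_def by (intro measure_mono_fmeasurable) auto
  ultimately show ?thesis
    by linarith
qed

lemma measure_excess_set_le_of_tendsto:
  fixes h :: "complex \<Rightarrow> real"
  assumes h: "integrable lebesgue h" and B: "differentiation_basis B"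
    and g: "gk \<longlonglongrightarrow> g0" "\<And>m. norm (gk m) = 1" "norm g0 = 1"
    and le: "\<And>m. measure lebesgue (excess_set B h (gk m) q k N) \<le> c"
  shows "measure lebesgue (excess_set B h g0 q k N) \<le> c"
proof -
  let ?A = "\<lambda>m. excess_set B h (gk m) q k N"
  \<comment> \<open>lower semicontinuity of sup_avg in the rotation: each point of the limit excess set
      lies in all but finitely many of the approximating ones\<close>
  have sub: "excess_set B h g0 q k N \<subseteq> (\<Union>M0. \<Inter>m\<in>{M0..}. ?A m)"
  proof
    fix x assume "x \<in> excess_set B h g0 q k N"
    then have x: "h x < q" "x \<in> ball 0 (real k)" "ereal q < sup_avg B h g0 x (inverse (real (Suc N)))"
      unfolding excess_set_def by auto
    obtain M0 where "\<And>m. m \<ge> M0 \<Longrightarrow> ereal q < sup_avg B h (gk m) x (inverse (real (Suc N)))"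
      using eventually_less_sup_avg[OF h B g x(3)] unfolding eventually_sequentially by blast
    then show "x \<in> (\<Union>M0. \<Inter>m\<in>{M0..}. ?A m)"
      using x(1,2) unfolding excess_set_def by auto
  qed
  have "?A m \<subseteq> ball 0 (real k)" for m
    unfolding excess_set_def by blast
  from measure_le_of_subset_liminf[OF fmeasurableD[OF lmeasurable_excess_set[OF h B g(2)]]
      this lmeasurable_ball le fmeasurableD[OF lmeasurable_excess_set[OF h B g(3)]] sub]
  show ?thesis .
qed

lemma F_class_rotated_basis_iff:
  fixes f :: "complex \<Rightarrow> real"
  assumes f: "integrable lebesgue f" and B: "differentiation_basis B"
    and TI: "translation_invariant B" and g: "norm g = 1"
  shows "f \<in> F_class (rotated_basis B g) \<longleftrightarrow>
         (\<forall>h\<in>{f, \<lambda>y. - f y}. \<forall>(q::rat) (k::nat) (j::nat). \<exists>N.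
            measure lebesgue (excess_set B h g (of_rat q) k N) \<le> inverse (real (Suc j)))"
  using f rotated_basis_small[OF B g]
  by (simp add: F_class_iff_upper_deriv_le AE_upper_deriv_rotated_basis_le_iff[OF _ B TI g])

subsection \<open>Open and \<open>G\<delta>\<sigma>\<close> sets of rotations\<close>

lemma norm_exp_i_minus_1_le: "norm (exp (\<i> * of_real t) - 1) \<le> \<bar>t\<bar>"
proof -
  have "(norm (exp (\<i> * of_real t) - 1))\<^sup>2 = (cos t - 1)\<^sup>2 + (sin t)\<^sup>2"
    unfolding cmod_power2 by (simp add: Re_exp Im_exp)
  also have "\<dots> = 4 * (sin (t/2))\<^sup>2"
    using sin_cos_squared_add[of t] cos_double_sin[of "t/2"] by (simp add: power2_eq_square algebra_simps)
  also have "\<dots> \<le> 4 * (t/2)\<^sup>2"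
    using power_mono[OF abs_sin_x_le_abs_x[of "t/2"] abs_ge_zero, of 2] by (simp add: power_divide)
  also have "\<dots> = \<bar>t\<bar>\<^sup>2"
    by (simp add: power2_eq_square)
  finally show ?thesis
    by (rule power2_le_imp_le) simp
qed

lemma norm_diff_le_arc_dist:
  assumes "z \<in> Gamma2" and "w \<in> Gamma2"
  shows "norm (w - z) \<le> arc_dist z w"
proof -
  define u where "u = z / w"
  have "norm z = 1" "norm w = 1"
    using assms by (auto simp: Gamma2_def)
  then have "norm u = 1" "w \<noteq> 0" "z \<noteq> 0"
    by (auto simp: u_def norm_divide)
  then have "u = exp (\<i> * of_real (Arg u))" "w - z = - (w * (u - 1))"
    using Arg_eq[of u] by (auto simp: u_def algebra_simps)
  then have "norm (w - z) = norm (exp (\<i> * of_real (Arg u)) - 1)"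
    using \<open>norm w = 1\<close> by (metis norm_minus_cancel norm_mult mult_1)
  also have "\<dots> \<le> arc_dist z w"
    unfolding arc_dist_def u_def by (rule norm_exp_i_minus_1_le)
  finally show ?thesis .
qed

lemma open_Gamma2_Collect_not:
  assumes closed: "\<And>w z. (\<And>m. w m \<in> Gamma2) \<Longrightarrow> w \<longlonglongrightarrow> z \<Longrightarrow> z \<in> Gamma2 \<Longrightarrow> (\<And>m. P (w m)) \<Longrightarrow> P z"
  shows "open_Gamma2 {g\<in>Gamma2. \<not> P g}"
  unfolding open_Gamma2_def
proof (intro conjI ballI)
  fix z assume z: "z \<in> {g\<in>Gamma2. \<not> P g}"
  show "\<exists>e>0. \<forall>w\<in>Gamma2. arc_dist z w < e \<longrightarrow> w \<in> {g\<in>Gamma2. \<not> P g}"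
  proof (rule ccontr)
    assume not_open: "\<not> ?thesis"
    have "\<forall>m. \<exists>w. w \<in> Gamma2 \<and> arc_dist z w < inverse (real (Suc m)) \<and> P w"
    proof
      fix m
      have "inverse (real (Suc m)) > 0"
        by simp
      then show "\<exists>w. w \<in> Gamma2 \<and> arc_dist z w < inverse (real (Suc m)) \<and> P w"
        using not_open by blast
    qed
    then obtain w where "\<forall>m. w m \<in> Gamma2 \<and> arc_dist z (w m) < inverse (real (Suc m)) \<and> P (w m)"
      by (metis choice)
    then have w: "\<And>m. w m \<in> Gamma2" "\<And>m. arc_dist z (w m) < inverse (real (Suc m))"
      "\<And>m. P (w m)"
      by auto
    have "z \<in> Gamma2"
      using z by blast
    then have "norm (w n - z) \<le> inverse (real (Suc n))" for n
      using norm_diff_le_arc_dist[OF _ w(1), of z n] w(2)[of n] by linarith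
    then have "(\<lambda>n. w n - z) \<longlonglongrightarrow> 0"
      by (intro Lim_null_comparison[OF _ LIMSEQ_inverse_real_of_nat] always_eventually) simp
    then have "w \<longlonglongrightarrow> z"
      by (rule LIM_zero_cancel)
    then have "P z"
      using z w(1,3) by (rule_tac closed) auto
    then show False
      using z by blast
  qed
qed auto

lemma open_Gamma2_less_measure_excess_set:
  fixes h :: "complex \<Rightarrow> real"
  assumes h: "integrable lebesgue h" and B: "differentiation_basis B"
  shows "open_Gamma2 {g\<in>Gamma2. c < measure lebesgue (excess_set B h g q k N)}"
  unfolding not_le[symmetric]
  by (rule open_Gamma2_Collect_not) (auto simp: Gamma2_def intro: measure_excess_set_le_of_tendsto[OF h B])

lemma G_delta_sigma_Gamma2_UN_INT:
  fixes U :: "'i::countable \<Rightarrow> nat \<Rightarrow> complex set"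
  assumes "\<And>i m. open_Gamma2 (U i m)"
  shows "G_delta_sigma_Gamma2 (\<Union>i. \<Inter>m. U i m)"
proof -
  have "(\<Union>i. \<Inter>m. U i m) = (\<Union>n. \<Inter>m. U (from_nat n) m)"
  proof (intro equalityI subsetI)
    fix x assume "x \<in> (\<Union>i. \<Inter>m. U i m)"
    then obtain i where "x \<in> (\<Inter>m. U i m)"
      by blast
    then show "x \<in> (\<Union>n. \<Inter>m. U (from_nat n) m)"
      by (intro UN_I[of "to_nat i"]) auto
  qed auto
  then show ?thesis
    unfolding G_delta_sigma_Gamma2_def using assms by (intro exI[of _ "\<lambda>n. U (from_nat n)"]) simp
qed

lemma W_setE:
  assumes "W_set B E"
  obtains f where "integrable lebesgue f" "E = {g\<in>Gamma2. f \<notin> F_class (rotated_basis B g)}"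
  using assms unfolding W_set_def by blast

theorem theorem2:
  fixes B :: "complex \<Rightarrow> complex set set" and E :: "complex set"
  assumes "differentiation_basis B"
    and "translation_invariant B"
    and "W_set B E"
  shows "G_delta_sigma_Gamma2 E"
proof -
  note B = assms(1) and TI = assms(2)
  obtain f where f: "integrable lebesgue f" and E: "E = {g\<in>Gamma2. f \<notin> F_class (rotated_basis B g)}"
    using assms(3) by (rule W_setE)
  define h where "h s = (if s then f else (\<lambda>y. - f y))" for s :: bool
  have h: "integrable lebesgue (h s)" for s
    unfolding h_def using f by auto
  define U :: "bool \<times> rat \<times> nat \<times> nat \<Rightarrow> nat \<Rightarrow> complex set" where
    "U = (\<lambda>(s, q, k, j) N. {g\<in>Gamma2.
       inverse (real (Suc j)) < measure lebesgue (excess_set B (h s) g (of_rat q) k N)})"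
  have "f \<in> F_class (rotated_basis B g) \<longleftrightarrow> (\<forall>s q k j. \<exists>N.
      measure lebesgue (excess_set B (h s) g (of_rat q) k N) \<le> inverse (real (Suc j)))"
    if "g \<in> Gamma2" for g
    using F_class_rotated_basis_iff[OF f B TI, of g] that by (simp add: h_def all_bool_eq Gamma2_def)
  then have "E = (\<Union>i. \<Inter>N. U i N)"
    unfolding E U_def by (auto simp flip: not_le) blast
  moreover have "open_Gamma2 (U i N)" for i N
    by (cases i) (simp add: U_def open_Gamma2_less_measure_excess_set[OF h B])
  ultimately show ?thesis
    using G_delta_sigma_Gamma2_UN_INT[of U] by simp
qed

end
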